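(* Let $N$ be even, $f_c$ an integer with $n=2f_c+1\le N$, $r\ge1$ an integer with $f_c\ge128r$, $Q=Q_{\mathrm{flat,1D}}$, and $x\in\mathbb{R}_+^N$ with support in $\mathcal{R}_1(3.74r,r;N,n)$. Let $z\in\mathbb{R}^N$, $s=Qx+z$, and let $\hat x$ be a solution of $\min_{\hat x\in\mathbb{R}^N}\|s-Q\hat x\|_1$ subject to $\hat x\ge0$. Set $h=\hat x-x=(h_0,\dots,h_{N-1})^T$ and $\mathcal{T}=\{l/N: h_l<0\}$. Suppose there exist $q=(q_0,\dots,q_{N-1})^T\in\mathbb{R}^N$ and $0<\rho<1$ such that $Qq=q$, $\|q\|_\infty\le1$, $q_l=0$ whenever $l/N\in\mathcal{T}$, and $q_l>2\rho$ otherwise. Then $$\|\hat x-x\|_1\le\frac{2(1-\rho)}{\rho}\,\|z\|_1.$$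
   Context: $F\in\mathbb{C}^{N\times N}$ is the DFT matrix $[F]_{k,l}=N^{-1/2}e^{-i2\pi kl/N}$, $k\in\{-N/2+1,\dots,N/2\}$, $l\in\{0,\dots,N-1\}$. $Q_{\mathrm{flat,1D}}=F^H\mathrm{diag}(\hat p_{-N/2+1},\dots,\hat p_{N/2})F$ with $\hat p_k=1$ for $|k|\le f_c$ and $0$ otherwise. $\lambda_c=1/f_c$. Entry $x_l$ is identified with the point $l/N$ of $\mathbb{T}=\mathbb{R}/\mathbb{Z}$, and the support of $x$ is the set of such points where $x_l\neq0$. A set $\mathcal{T}\subset\{0,1/N,\dots,1-1/N\}$ belongs to $\mathcal{R}_1(d,r;N,n)$ if it can be partitioned into $r$ pairwise disjoint subsets $\mathcal{T}_1,\dots,\mathcal{T}_r$ such that each interval of $\mathbb{T}$ of length $d\lambda_c/2$ contains at most one point of each $\mathcal{T}_i$. *)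

theory Defs
  imports "HOL-Analysis.Analysis"
begin

text \<open>Vectors in R^N / C^N are functions on indices 0..N-1 (values outside are irrelevant).
DFT matrix with row index k in {-N/2+1..N/2}, column index l in {0..N-1}.\<close>

definition dft :: "nat \<Rightarrow> int \<Rightarrow> nat \<Rightarrow> complex" where
  "dft N k l = complex_of_real (1 / sqrt (real N)) *
      exp (- \<i> * complex_of_real (2 * pi * real_of_int k * real l / real N))"

definition dft_rows :: "nat \<Rightarrow> int set" where
  "dft_rows N = {- int (N div 2) + 1 .. int (N div 2)}"

definition lowpass :: "nat \<Rightarrow> int \<Rightarrow> complex" where
  "lowpass fc k = (if \<bar>k\<bar> \<le> int fc then 1 else 0)"

text \<open>Entry (l,m) of Q_flat,1D = F^H diag(p) F.\<close>
definition Qflat :: "nat \<Rightarrow> nat \<Rightarrow> nat \<Rightarrow> nat \<Rightarrow> complex" where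
  "Qflat N fc l m = (\<Sum>k\<in>dft_rows N. cnj (dft N k l) * lowpass fc k * dft N k m)"

definition Qapp :: "nat \<Rightarrow> nat \<Rightarrow> (nat \<Rightarrow> real) \<Rightarrow> nat \<Rightarrow> complex" where
  "Qapp N fc v l = (\<Sum>m<N. Qflat N fc l m * complex_of_real (v m))"

text \<open>Closed arc of the torus R/Z of length L starting at a (points represented in [0,1)).\<close>
definition torus_arc :: "real \<Rightarrow> real \<Rightarrow> real set" where
  "torus_arc a L = {t. 0 \<le> t \<and> t < 1 \<and> frac (t - a) \<le> L}"

text \<open>R_1(d,r;N,n) with f_c = (n-1)/2 and lambda_c = 1/f_c.\<close>
definition R1 :: "real \<Rightarrow> nat \<Rightarrow> nat \<Rightarrow> nat \<Rightarrow> real set set" where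
  "R1 d r N n = {T. T \<subseteq> {real l / real N | l. l < N} \<and>
     (\<exists>P :: nat \<Rightarrow> real set. (\<Union>i<r. P i) = T \<and>
        (\<forall>i<r. \<forall>j<r. i \<noteq> j \<longrightarrow> P i \<inter> P j = {}) \<and>
        (\<forall>i<r. \<forall>a. card (P i \<inter> torus_arc a (d * (1 / ((real n - 1) / 2)) / 2)) \<le> 1))}"

definition support_pts :: "nat \<Rightarrow> (nat \<Rightarrow> real) \<Rightarrow> real set" where
  "support_pts N x = {real l / real N | l. l < N \<and> x l \<noteq> 0}"

end

theory Submission
  imports Defs
begin

text \<open>
  Let \<open>h = x\<^sub>h - x\<close>. Testing the optimality of \<open>x\<^sub>h\<close> against the feasible point \<open>x\<close> gives
  \<open>\<parallel>z - Qh\<parallel>\<^sub>1 \<le> \<parallel>z\<parallel>\<^sub>1\<close>, hence \<open>\<parallel>Qh\<parallel>\<^sub>1 \<le> 2\<parallel>z\<parallel>\<^sub>1\<close>. The certificate is turned into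
  \<open>c = q/\<rho> - 1\<close>; since \<open>Q\<close> is a Hermitian projection fixing constants and \<open>q\<close>, also \<open>Qc = c\<close>, so
  \<open>\<langle>c, h\<rangle> = \<langle>c, Qh\<rangle> \<le> \<parallel>c\<parallel>\<^sub>\<infinity> \<parallel>Qh\<parallel>\<^sub>1\<close>. The sign pattern of \<open>q\<close> gives \<open>|h\<^sub>l| \<le> c\<^sub>l h\<^sub>l\<close>, and
  \<open>\<parallel>c\<parallel>\<^sub>\<infinity> \<le> (1-\<rho>)/\<rho>\<close> once \<open>\<rho> \<le> 1/2\<close>. The latter holds because the separation condition keeps
  the support of \<open>x\<close> from being everything, so some \<open>h\<^sub>l \<ge> 0\<close> and then \<open>1 \<ge> q\<^sub>l > 2\<rho>\<close>.
\<close>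

lemma sum_exp_roots_of_unity_eq_0:
  fixes N :: nat and k :: int
  assumes N: "N > 0" and k: "k \<noteq> 0" "\<bar>k\<bar> < int N"
  shows "(\<Sum>l<N. exp (\<i> * complex_of_real (2 * pi * real_of_int k * real l / real N))) = 0"
proof -
  define w where "w = exp (\<i> * complex_of_real (2 * pi * real_of_int k / real N))"
  have exp_eq_power: "exp (\<i> * complex_of_real (2 * pi * real_of_int k * real l / real N)) = w ^ l"
    for l
  proof -
    have "\<i> * complex_of_real (2 * pi * real_of_int k * real l / real N)
        = of_nat l * (\<i> * complex_of_real (2 * pi * real_of_int k / real N))"
      by (simp add: field_simps)
    then show ?thesis unfolding w_def by (metis exp_of_nat_mult)
  qed
  have "w ^ N = exp (of_nat N * (\<i> * complex_of_real (2 * pi * real_of_int k / real N)))"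
    unfolding w_def by (metis exp_of_nat_mult)
  also have "of_nat N * (\<i> * complex_of_real (2 * pi * real_of_int k / real N))
      = (2 * of_int k * pi) * \<i>"
    using N by (simp add: field_simps)
  also have "exp ((2 * of_int k * pi) * \<i>) = 1" by (rule exp_integer_2pi) simp
  finally have "w ^ N = 1" .
  moreover have "w \<noteq> 1"
  proof
    assume "w = 1"
    then obtain n :: int where "2 * pi * real_of_int k / real N = of_int (2 * n) * pi"
      unfolding w_def exp_eq_1 by auto
    then have "real_of_int k = real_of_int n * real N" using N by (simp add: field_simps)
    then have "k = n * int N" by (metis of_int_eq_iff of_int_mult of_int_of_nat_eq)
    moreover have "n = 0 \<or> \<bar>n * int N\<bar> \<ge> int N"
      using N by (auto simp: abs_mult mult_le_cancel_right1)
    ultimately show False using k by auto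
  qed
  ultimately show ?thesis unfolding exp_eq_power by (simp add: sum_gp_strict)
qed

lemma cnj_Qflat: "cnj (Qflat N fc l m) = Qflat N fc m l"
  unfolding Qflat_def cnj_sum by (rule sum.cong) (auto simp: lowpass_def)

lemma sum_cnj_dft:
  assumes "N > 0" and "k \<in> dft_rows N"
  shows "(\<Sum>l<N. cnj (dft N k l)) = (if k = 0 then complex_of_real (sqrt (real N)) else 0)"
proof -
  have cnj_dft: "cnj (dft N k l) = complex_of_real (1 / sqrt (real N)) *
      exp (\<i> * complex_of_real (2 * pi * real_of_int k * real l / real N))" for l
    unfolding dft_def by (simp add: exp_cnj)
  have "(\<Sum>l<N. cnj (dft N k l)) = complex_of_real (1 / sqrt (real N)) *
     (\<Sum>l<N. exp (\<i> * complex_of_real (2 * pi * real_of_int k * real l / real N)))"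
    by (simp only: cnj_dft sum_distrib_left)
  moreover have "\<bar>k\<bar> < int N" using assms unfolding dft_rows_def by auto
  moreover have "of_nat N * complex_of_real (1 / sqrt (real N)) = complex_of_real (sqrt (real N))"
  proof -
    have "real N * (1 / sqrt (real N)) = sqrt (real N)" by (simp add: real_div_sqrt)
    then show ?thesis by (metis of_real_mult of_real_of_nat_eq)
  qed
  ultimately show ?thesis using sum_exp_roots_of_unity_eq_0[OF \<open>N > 0\<close>] by auto
qed

text \<open>The zero frequency lies in the passband, so \<open>Q\<close> reproduces constant vectors.\<close>

lemma sum_Qflat_column:
  assumes "N \<ge> 2"
  shows "(\<Sum>l<N. Qflat N fc l m) = 1"
proof -
  have rows: "0 \<in> dft_rows N" using assms unfolding dft_rows_def by auto
  have "(\<Sum>l<N. Qflat N fc l m)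
      = (\<Sum>k\<in>dft_rows N. (\<Sum>l<N. cnj (dft N k l)) * (lowpass fc k * dft N k m))"
    unfolding Qflat_def sum_distrib_right by (subst sum.swap) (simp add: mult.assoc)
  also have "\<dots> = (\<Sum>k\<in>dft_rows N.
      if k = 0 then complex_of_real (sqrt (real N)) * (lowpass fc k * dft N k m) else 0)"
    using assms by (intro sum.cong) (auto simp: sum_cnj_dft)
  also have "\<dots> = complex_of_real (sqrt (real N)) * (lowpass fc 0 * dft N 0 m)"
    using rows by (simp add: sum.delta[OF finite_atLeastAtMost_int] dft_rows_def)
  also have "\<dots> = 1" using assms
    by (simp add: lowpass_def dft_def of_real_mult[symmetric] del: of_real_mult)
  finally show ?thesis .
qed

lemma Qapp_const:
  assumes "N \<ge> 2"
  shows "Qapp N fc (\<lambda>_. a) l = complex_of_real a"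
proof -
  have "(\<Sum>m<N. Qflat N fc l m) = cnj (\<Sum>m<N. Qflat N fc m l)"
    by (simp add: cnj_Qflat)
  then show ?thesis
    using sum_Qflat_column[OF assms] by (simp add: Qapp_def sum_distrib_right[symmetric])
qed

lemma Qapp_affine:
  "Qapp N fc (\<lambda>m. a * v m + b) l = complex_of_real a * Qapp N fc v l + Qapp N fc (\<lambda>_. b) l"
  unfolding Qapp_def by (simp add: sum_distrib_left sum.distrib[symmetric] algebra_simps)

lemma Qapp_affine_of_fixed:
  assumes "N \<ge> 2" and "Qapp N fc v l = complex_of_real (v l)"
  shows "Qapp N fc (\<lambda>m. a * v m + b) l = complex_of_real (a * v l + b)"
  using assms by (simp only: Qapp_affine Qapp_const) simp

lemma Qapp_diff: "Qapp N fc (\<lambda>m. a m - b m) l = Qapp N fc a l - Qapp N fc b l"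
  unfolding Qapp_def by (simp add: sum_subtractf[symmetric] algebra_simps)

lemma sum_mult_Qapp_self_adjoint:
  "(\<Sum>l<N. complex_of_real (c l) * Qapp N fc h l)
     = (\<Sum>m<N. cnj (Qapp N fc c m) * complex_of_real (h m))"
  unfolding Qapp_def sum_distrib_left sum_distrib_right cnj_sum
  by (subst sum.swap) (simp add: cnj_Qflat mult_ac)

lemma sum_mult_Qapp_fixed:
  assumes "\<forall>l<N. Qapp N fc c l = complex_of_real (c l)"
  shows "(\<Sum>l<N. complex_of_real (c l) * Qapp N fc h l) = complex_of_real (\<Sum>l<N. c l * h l)"
  using assms by (simp add: sum_mult_Qapp_self_adjoint)

lemma l1_norm_le_by_dual_certificate:
  assumes fixed: "\<forall>l<N. Qapp N fc c l = complex_of_real (c l)"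
    and sign: "\<forall>l<N. \<bar>h l\<bar> \<le> c l * h l"
    and bound: "\<forall>l<N. \<bar>c l\<bar> \<le> C"
  shows "(\<Sum>l<N. \<bar>h l\<bar>) \<le> C * (\<Sum>l<N. cmod (Qapp N fc h l))"
proof -
  have "(\<Sum>l<N. \<bar>h l\<bar>) \<le> (\<Sum>l<N. c l * h l)" using sign by (intro sum_mono) auto
  also have "\<dots> = Re (\<Sum>l<N. complex_of_real (c l) * Qapp N fc h l)"
    by (simp add: sum_mult_Qapp_fixed[OF fixed])
  also have "\<dots> \<le> (\<Sum>l<N. cmod (complex_of_real (c l) * Qapp N fc h l))"
    by (rule order_trans[OF complex_Re_le_cmod norm_sum])
  also have "\<dots> \<le> (\<Sum>l<N. C * cmod (Qapp N fc h l))"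
    using bound by (intro sum_mono) (simp add: norm_mult mult_right_mono)
  finally show ?thesis by (simp add: sum_distrib_left)
qed

lemma l1_dist_le_of_residual_le:
  fixes a b :: "nat \<Rightarrow> complex"
  assumes "(\<Sum>l<N. cmod (a l + complex_of_real (z l) - b l)) \<le> (\<Sum>l<N. \<bar>z l\<bar>)"
  shows "(\<Sum>l<N. cmod (b l - a l)) \<le> 2 * (\<Sum>l<N. \<bar>z l\<bar>)"
proof -
  have "cmod (b l - a l) \<le> cmod (a l + complex_of_real (z l) - b l) + \<bar>z l\<bar>" for l
    using norm_triangle_ineq4[of "complex_of_real (z l)" "a l + complex_of_real (z l) - b l"]
    by (simp add: algebra_simps)
  then have "(\<Sum>l<N. cmod (b l - a l))
      \<le> (\<Sum>l<N. cmod (a l + complex_of_real (z l) - b l)) + (\<Sum>l<N. \<bar>z l\<bar>)"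
    by (simp add: sum.distrib[symmetric] sum_mono)
  then show ?thesis using assms by simp
qed

lemma abs_le_certificate_mult:
  fixes h q \<rho> :: real
  assumes "h < 0 \<Longrightarrow> q = 0" and "\<not> h < 0 \<Longrightarrow> q > 2 * \<rho>" and "\<rho> > 0"
  shows "\<bar>h\<bar> \<le> (q / \<rho> - 1) * h"
proof (cases "h < 0")
  case False
  then have "q / \<rho> - 1 \<ge> 1" using assms by (simp add: field_simps)
  then show ?thesis using False by (simp add: mult_le_cancel_right1)
qed (use assms in simp)

lemma abs_certificate_le:
  fixes q \<rho> :: real
  assumes "0 \<le> q" "q \<le> 1" "0 < \<rho>" "\<rho> \<le> 1 / 2"
  shows "\<bar>q / \<rho> - 1\<bar> \<le> (1 - \<rho>) / \<rho>"
  using assms by (auto simp: abs_le_iff field_simps)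

text \<open>
  The arc of length \<open>d\<lambda>\<^sub>c/2\<close> at \<open>0\<close> contains the \<open>r + 1\<close> grid points \<open>0, 1/N, \<dots>, r/N\<close>, while
  each of the \<open>r\<close> parts of a set in \<open>R\<^sub>1\<close> meets it at most once.
\<close>

lemma R1_support_not_full:
  assumes R: "support_pts N x \<in> R1 d r N n"
    and "r < N" and arc: "real r / real N \<le> d / (real n - 1)"
  shows "\<exists>l<N. x l = 0"
proof (rule ccontr)
  assume "\<not> (\<exists>l<N. x l = 0)"
  then have full: "\<forall>l<N. x l \<noteq> 0" by blast
  define A where "A = torus_arc 0 (d * (1 / ((real n - 1) / 2)) / 2)"
  obtain P where PU: "(\<Union>i<r. P i) = support_pts N x"
    and Pc: "\<forall>i<r. \<forall>a. card (P i \<inter> torus_arc a (d * (1 / ((real n - 1) / 2)) / 2)) \<le> 1"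
    using R unfolding R1_def by auto
  then have Pc: "\<forall>i<r. card (P i \<inter> A) \<le> 1" unfolding A_def by blast
  define S where "S = (\<lambda>l. real l / real N) ` {..r}"
  have "card S = r + 1"
    unfolding S_def using \<open>r < N\<close> by (subst card_image) (auto simp: inj_on_def)
  have "finite (support_pts N x)" unfolding support_pts_def
    by (rule finite_subset[of _ "(\<lambda>l. real l / real N) ` {..<N}"]) auto
  then have fin: "finite (\<Union>i<r. P i \<inter> A)" by (rule finite_subset[rotated]) (use PU in blast)
  have "S \<subseteq> (\<Union>i<r. P i \<inter> A)"
  proof
    fix t assume "t \<in> S"
    then obtain l where l: "l \<le> r" "t = real l / real N" unfolding S_def by auto
    have "0 \<le> t" "t < 1" using l \<open>r < N\<close> by auto
    moreover have "t \<le> real r / real N" using l by (simp add: divide_right_mono)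
    moreover have "d * (1 / ((real n - 1) / 2)) / 2 = d / (real n - 1)" by (simp add: field_split_simps)
    ultimately have "t \<in> A"
      using arc unfolding A_def torus_arc_def by (simp add: frac_eq)
    moreover have "t \<in> support_pts N x" unfolding support_pts_def using l \<open>r < N\<close> full by auto
    ultimately show "t \<in> (\<Union>i<r. P i \<inter> A)" using PU by blast
  qed
  then have "card S \<le> card (\<Union>i<r. P i \<inter> A)" by (rule card_mono[OF fin])
  also have "\<dots> \<le> (\<Sum>i<r. card (P i \<inter> A))" by (rule card_UN_le) simp
  also have "\<dots> \<le> r" using Pc sum_mono[of "{..<r}" "\<lambda>i. card (P i \<inter> A)" "\<lambda>_. 1"] by simp
  finally show False using \<open>card S = r + 1\<close> by simp
qed

theorem lemma1:
  fixes N fc r :: nat and x z xh q :: "nat \<Rightarrow> real" and \<rho> :: real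
  assumes "even N"
    and "2 * fc + 1 \<le> N"
    and "r \<ge> 1"
    and "fc \<ge> 128 * r"
    and "\<forall>l<N. x l \<ge> 0"
    and "support_pts N x \<in> R1 (3.74 * real r) r N (2 * fc + 1)"
    and "\<forall>l<N. xh l \<ge> 0"
    and "\<forall>y. (\<forall>l<N. y l \<ge> 0) \<longrightarrow>
           (\<Sum>l<N. cmod (Qapp N fc x l + complex_of_real (z l) - Qapp N fc xh l))
           \<le> (\<Sum>l<N. cmod (Qapp N fc x l + complex_of_real (z l) - Qapp N fc y l))"
    and "\<forall>l<N. Qapp N fc q l = complex_of_real (q l)"
    and "\<forall>l<N. \<bar>q l\<bar> \<le> 1"
    and "\<forall>l<N. xh l - x l < 0 \<longrightarrow> q l = 0"
    and "\<forall>l<N. \<not> (xh l - x l < 0) \<longrightarrow> q l > 2 * \<rho>"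
    and "0 < \<rho>" and "\<rho> < 1"
  shows "(\<Sum>l<N. \<bar>xh l - x l\<bar>) \<le> 2 * (1 - \<rho>) / \<rho> * (\<Sum>l<N. \<bar>z l\<bar>)"
proof -
  define h where "h l = xh l - x l" for l
  define c where "c l = q l / \<rho> - 1" for l
  have "N \<ge> 2" and "r < N" using assms(2-4) by linarith+
  moreover have "real r / real N \<le> 3.74 * real r / (real (2 * fc + 1) - 1)"
    using assms(2-4) by (simp add: field_simps)
  ultimately obtain l0 where "l0 < N" "x l0 = 0" using R1_support_not_full assms(6) by blast
  then have "\<not> xh l0 - x l0 < 0" using assms(7) by force
  then have "2 * \<rho> < q l0" using assms(12) \<open>l0 < N\<close> by blast
  moreover have "q l0 \<le> 1" using assms(10) \<open>l0 < N\<close> abs_le_D1 by blast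
  ultimately have "\<rho> \<le> 1 / 2" by simp
  have c_fixed: "\<forall>l<N. Qapp N fc c l = complex_of_real (c l)"
    using Qapp_affine_of_fixed[OF \<open>N \<ge> 2\<close>, where v = q and a = "1 / \<rho>" and b = "- 1"] assms(9)
    unfolding c_def by simp
  have "\<forall>l<N. 0 \<le> q l"
    using assms(11-13) by (metis less_eq_real_def less_trans mult_pos_pos zero_less_numeral)
  then have "\<forall>l<N. \<bar>c l\<bar> \<le> (1 - \<rho>) / \<rho>"
    using assms(10,13) \<open>\<rho> \<le> 1 / 2\<close> unfolding c_def
    by (intro allI impI abs_certificate_le) (auto dest: abs_le_D1)
  moreover have "\<forall>l<N. \<bar>h l\<bar> \<le> c l * h l"
    using assms(11-13) unfolding h_def c_def by (simp add: abs_le_certificate_mult)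
  ultimately have "(\<Sum>l<N. \<bar>h l\<bar>) \<le> (1 - \<rho>) / \<rho> * (\<Sum>l<N. cmod (Qapp N fc h l))"
    using l1_norm_le_by_dual_certificate[OF c_fixed] by blast
  also have "\<dots> \<le> (1 - \<rho>) / \<rho> * (2 * (\<Sum>l<N. \<bar>z l\<bar>))"
  proof (rule mult_left_mono)
    have "(\<Sum>l<N. cmod (Qapp N fc x l + complex_of_real (z l) - Qapp N fc xh l))
        \<le> (\<Sum>l<N. \<bar>z l\<bar>)"
      using assms(8)[rule_format, of x] assms(5) by simp
    then show "(\<Sum>l<N. cmod (Qapp N fc h l)) \<le> 2 * (\<Sum>l<N. \<bar>z l\<bar>)"
      unfolding h_def Qapp_diff by (rule l1_dist_le_of_residual_le)
  qed (use assms(13,14) in simp)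
  finally show ?thesis unfolding h_def by (simp add: algebra_simps)
qed

end
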